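(* There exists a pair of orientation preserving isometries $A,B$ of $\mathbb{H}^4$ which is linked by half-turns and such that there is neither a point, a line, a plane nor a hyperplane of $\mathbb{H}^4$ invariant under both $A$ and $B$.
   Context: A plane is a $2$-dimensional totally geodesic subspace of $\mathbb{H}^4$. For a plane $P$, the half-turn $H_P$ is the composition of reflections in two orthogonal hyperplanes intersecting in $P$. A pair $A,B$ is linked by half-turns if there are planes $\alpha,\beta,\delta$ with $A=H_\alpha H_\beta$ and $B=H_\beta H_\delta$. *)

theory Defs
  imports "HOL-Analysis.Analysis"
begin

text \<open>Hyperboloid model of hyperbolic 4-space inside Minkowski space R^{4,1}.
  Coordinate 0 is the time-like coordinate.\<close>

type_synonym vec5 = "real ^ 5"
type_synonym mat5 = "real ^ 5 ^ 5"

definition mink :: "vec5 \<Rightarrow> vec5 \<Rightarrow> real" where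
  "mink x y = - (x $ 0 * y $ 0) + (\<Sum>i\<in>UNIV - {0}. x $ i * y $ i)"

definition hyp :: "vec5 set" where
  "hyp = {x. mink x x = -1 \<and> x $ 0 > 0}"

definition orient_isometry :: "mat5 \<Rightarrow> bool" where
  "orient_isometry M \<longleftrightarrow>
     (\<forall>x y. mink (M *v x) (M *v y) = mink x y) \<and> (\<lambda>x. M *v x) ` hyp \<subseteq> hyp \<and> det M > 0"

text \<open>k-dimensional totally geodesic subspace of H^4 (k = 0 point, 1 line, 2 plane,
  3 hyperplane): intersection of H^4 with a (k+1)-dimensional linear subspace meeting it.\<close>
definition geod_subspace :: "nat \<Rightarrow> vec5 set \<Rightarrow> bool" where
  "geod_subspace k S \<longleftrightarrow>
     (\<exists>V. subspace V \<and> dim V = k + 1 \<and> V \<inter> hyp \<noteq> {} \<and> S = V \<inter> hyp)"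

definition is_plane :: "vec5 set \<Rightarrow> bool" where
  "is_plane P \<longleftrightarrow> geod_subspace 2 P"

text \<open>Reflection in the hyperplane {x \<in> H^4. mink x n = 0} for a space-like normal n.\<close>
definition refl_mat :: "vec5 \<Rightarrow> mat5" where
  "refl_mat n = (\<chi> i j. (if i = j then 1 else 0)
                    - 2 * n $ i * (if j = 0 then - n $ j else n $ j) / mink n n)"

definition hyperplane_of :: "vec5 \<Rightarrow> vec5 set" where
  "hyperplane_of n = {x \<in> hyp. mink x n = 0}"

definition is_half_turn :: "vec5 set \<Rightarrow> mat5 \<Rightarrow> bool" where
  "is_half_turn P H \<longleftrightarrow> is_plane P \<and>
     (\<exists>n1 n2. mink n1 n1 > 0 \<and> mink n2 n2 > 0 \<and> mink n1 n2 = 0 \<and>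
        hyperplane_of n1 \<inter> hyperplane_of n2 = P \<and> H = refl_mat n1 ** refl_mat n2)"

definition linked_by_half_turns :: "mat5 \<Rightarrow> mat5 \<Rightarrow> bool" where
  "linked_by_half_turns A B \<longleftrightarrow>
     (\<exists>\<alpha> \<beta> \<delta> H\<alpha> H\<beta> H\<delta>. is_half_turn \<alpha> H\<alpha> \<and> is_half_turn \<beta> H\<beta> \<and> is_half_turn \<delta> H\<delta> \<and>
        A = H\<alpha> ** H\<beta> \<and> B = H\<beta> ** H\<delta>)"

definition invariant :: "mat5 \<Rightarrow> vec5 set \<Rightarrow> bool" where
  "invariant M S \<longleftrightarrow> (\<lambda>x. M *v x) ` S = S"

end

theory Submission imports Defs begin

text \<open>A half-turn is a product of reflections in two orthogonal hyperplanes, so it preserves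
  the Minkowski form and the upper sheet of the hyperboloid; its determinant is positive because
  it is the square of an explicit rank-two perturbation of the identity. A product of two
  half-turns is therefore an orientation preserving isometry.

  For the explicit pair A, B below, A squared is the point reflection of H^4 in
  e0 = (1,0,0,0,0). If V \<inter> H^4 is A-invariant and contains p, then V also contains
  p + A^2 p, a positive multiple of e0, so e0 lies in V. The images of e0 under a few short words
  in A and B span R^5, so V is the whole space and no proper totally geodesic subspace is
  invariant under both A and B.\<close>

lemma exhaust_5:
  fixes i :: 5
  shows "i = 0 \<or> i = 1 \<or> i = 2 \<or> i = 3 \<or> i = 4"
proof (induct i)
  case (of_int z)
  then have "z = 0 \<or> z = 1 \<or> z = 2 \<or> z = 3 \<or> z = 4" by fastforce
  then show ?case by auto
qed

lemma forall_5: "(\<forall>i::5. P i) \<longleftrightarrow> P 0 \<and> P 1 \<and> P 2 \<and> P 3 \<and> P 4"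
  by (metis exhaust_5)

lemma UNIV_5: "(UNIV :: 5 set) = {0, 1, 2, 3, 4}"
  using exhaust_5 by auto

lemma sum_UNIV_5: "sum f (UNIV :: 5 set) = f 0 + f 1 + f 2 + f 3 + f 4"
  unfolding UNIV_5 by (simp add: ac_simps)

subsection \<open>The Minkowski form\<close>

lemma mink_expand: "mink x y = - (x$0 * y$0) + x$1 * y$1 + x$2 * y$2 + x$3 * y$3 + x$4 * y$4"
proof -
  have "UNIV - {0::5} = {1, 2, 3, 4}" unfolding UNIV_5 by auto
  then show ?thesis unfolding mink_def by (simp add: ac_simps)
qed

lemma mink_commute: "mink x y = mink y x"
  by (simp add: mink_expand mult.commute)

lemma mink_bilinear:
  "mink x (y + z) = mink x y + mink x z" "mink x (y - z) = mink x y - mink x z"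
  "mink x (c *\<^sub>R y) = c * mink x y"
  "mink (y + z) x = mink y x + mink z x" "mink (y - z) x = mink y x - mink z x"
  "mink (c *\<^sub>R y) x = c * mink y x"
  by (simp_all add: mink_expand algebra_simps)

definition mink_dual :: "vec5 \<Rightarrow> vec5" where
  "mink_dual n = (\<chi> j. if j = 0 then - n $ j else n $ j)"

lemma inner_mink_dual: "inner (mink_dual n) x = mink n x"
  by (simp add: inner_vec_def mink_dual_def sum_UNIV_5 mink_expand)

lemma sum_mink_dual: "(\<Sum>j\<in>UNIV. (if j = 0 then - n $ j else n $ j) * x $ j) = mink n x"
  using inner_mink_dual[of n x] by (simp add: inner_vec_def mink_dual_def)

text \<open>Reverse Cauchy-Schwarz inequality; the Euclidean part is bounded via Lagrange's identity.\<close>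

lemma mink_pos_opposite_sheets:
  assumes x: "mink x x = -1" "x$0 > 0" and y: "mink y y = -1" "y$0 \<le> 0"
  shows "mink x y > 0"
proof -
  define s where "s = x$1 * y$1 + x$2 * y$2 + x$3 * y$3 + x$4 * y$4"
  have x_space: "x$1^2 + x$2^2 + x$3^2 + x$4^2 = x$0^2 - 1"
    using x by (simp add: mink_expand power2_eq_square)
  have y_space: "y$1^2 + y$2^2 + y$3^2 + y$4^2 = y$0^2 - 1"
    using y by (simp add: mink_expand power2_eq_square)
  have "s^2 \<le> (x$1^2 + x$2^2 + x$3^2 + x$4^2) * (y$1^2 + y$2^2 + y$3^2 + y$4^2)"
  proof -
    have "(x$1^2 + x$2^2 + x$3^2 + x$4^2) * (y$1^2 + y$2^2 + y$3^2 + y$4^2) - s^2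
      = (x$1*y$2 - x$2*y$1)^2 + (x$1*y$3 - x$3*y$1)^2 + (x$1*y$4 - x$4*y$1)^2
        + (x$2*y$3 - x$3*y$2)^2 + (x$2*y$4 - x$4*y$2)^2 + (x$3*y$4 - x$4*y$3)^2"
      unfolding s_def power2_eq_square by (simp add: algebra_simps)
    then show ?thesis by (smt (verit) zero_le_power2)
  qed
  also have "\<dots> = (x$0 * y$0)^2 - x$0^2 - y$0^2 + 1"
    unfolding x_space y_space by (simp add: algebra_simps)
  also have "\<dots> < (x$0 * y$0)^2"
    using x_space y_space
    by (smt (verit) zero_le_power2)
  finally have "s^2 < (- (x$0 * y$0))^2" by simp
  moreover have "0 \<le> - (x$0 * y$0)" using x y by (simp add: mult_nonneg_nonpos)
  ultimately have "\<bar>s\<bar> < - (x$0 * y$0)"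
    using power2_less_imp_less[of "\<bar>s\<bar>"] by simp
  then show ?thesis by (simp add: mink_expand s_def)
qed

subsection \<open>Reflections and half-turns\<close>

lemma refl_mat_apply: "refl_mat n *v x = x - (2 * mink n x / mink n n) *\<^sub>R n"
proof -
  have "(refl_mat n *v x) $ i = x $ i - (2 * n $ i / mink n n) * mink n x" for i
  proof -
    have "(refl_mat n *v x) $ i = (\<Sum>j\<in>UNIV. (if i = j then x $ j else 0)
        - (2 * n $ i / mink n n) * ((if j = 0 then - n $ j else n $ j) * x $ j))"
      unfolding matrix_vector_mult_def refl_mat_def
      by (simp, rule sum.cong) (auto simp: algebra_simps)
    then show ?thesis
      by (simp only: sum_subtractf sum_distrib_left[symmetric] sum_mink_dual) simp
  qed
  then show ?thesis by (simp add: vec_eq_iff)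
qed

lemma refl_mat_involutive:
  assumes "mink n n \<noteq> 0"
  shows "refl_mat n ** refl_mat n = mat 1"
proof -
  have "refl_mat n *v (refl_mat n *v x) = x" for x
  proof -
    have "mink n (refl_mat n *v x) = - mink n x"
      using assms by (simp add: refl_mat_apply mink_bilinear)
    moreover have "refl_mat n *v (refl_mat n *v x)
        = refl_mat n *v x - (2 * mink n (refl_mat n *v x) / mink n n) *\<^sub>R n"
      by (rule refl_mat_apply)
    ultimately show ?thesis by (simp add: refl_mat_apply)
  qed
  then show ?thesis by (simp add: matrix_eq matrix_vector_mul_assoc[symmetric])
qed

lemma refl_mat_mink:
  assumes "mink n n \<noteq> 0"
  shows "mink (refl_mat n *v x) (refl_mat n *v y) = mink x y"
proof -
  define a where "a = 2 * mink n x / mink n n"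
  define b where "b = 2 * mink n y / mink n n"
  have "mink (refl_mat n *v x) (refl_mat n *v y) = mink (x - a *\<^sub>R n) (y - b *\<^sub>R n)"
    by (simp add: refl_mat_apply a_def b_def)
  also have "\<dots> = mink x y - b * mink n x - a * mink n y + a * b * mink n n"
    by (simp add: mink_bilinear mink_commute[of x n] algebra_simps)
  also have "a * b * mink n n = b * mink n x + a * mink n y"
    using assms by (simp add: a_def b_def field_simps)
  finally show ?thesis by simp
qed

text \<open>The reflection moves x by a multiple of the spacelike normal n, which cannot flip x to the
  lower sheet: there mink x (refl x) would be positive, but it equals -1 - 2 (mink n x)^2 / mink n n.\<close>

lemma refl_mat_hyp:
  assumes n: "mink n n > 0" and x: "x \<in> hyp"
  shows "refl_mat n *v x \<in> hyp"
proof -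
  let ?y = "refl_mat n *v x"
  have xx: "mink x x = -1" "x$0 > 0" using x by (auto simp: hyp_def)
  have yy: "mink ?y ?y = -1" using refl_mat_mink[of n x x] n xx by simp
  have "mink x ?y = -1 - 2 * (mink n x)^2 / mink n n"
    using xx by (simp add: refl_mat_apply mink_bilinear mink_commute[of x n] power2_eq_square)
  moreover have "0 \<le> 2 * (mink n x)^2 / mink n n" using n by simp
  ultimately have "\<not> mink x ?y > 0" by linarith
  then have "?y $ 0 > 0" using mink_pos_opposite_sheets[OF xx yy] by fastforce
  with yy show ?thesis by (simp add: hyp_def)
qed

lemma half_turn_apply:
  assumes "mink n1 n2 = 0"
  shows "(refl_mat n1 ** refl_mat n2) *v x
     = x - (2 * mink n1 x / mink n1 n1) *\<^sub>R n1 - (2 * mink n2 x / mink n2 n2) *\<^sub>R n2"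
proof -
  have "mink n1 (refl_mat n2 *v x) = mink n1 x"
    using assms by (simp add: refl_mat_apply mink_bilinear)
  moreover have "(refl_mat n1 ** refl_mat n2) *v x
      = refl_mat n2 *v x - (2 * mink n1 (refl_mat n2 *v x) / mink n1 n1) *\<^sub>R n1"
    by (simp add: matrix_vector_mul_assoc[symmetric] refl_mat_apply[of n1])
  ultimately show ?thesis
    by (simp add: refl_mat_apply algebra_simps)
qed

definition rank2_update :: "vec5 \<Rightarrow> vec5 \<Rightarrow> vec5 \<Rightarrow> vec5 \<Rightarrow> mat5" where
  "rank2_update a b c d = (\<chi> i j. (if i = j then 1 else 0)
       - a$i * (if j = 0 then - b$j else b$j) - c$i * (if j = 0 then - d$j else d$j))"

lemma rank2_update_apply: "rank2_update a b c d *v x = x - mink b x *\<^sub>R a - mink d x *\<^sub>R c"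
proof -
  have "(rank2_update a b c d *v x) $ i = x $ i - a $ i * mink b x - c $ i * mink d x" for i
  proof -
    have "(rank2_update a b c d *v x) $ i = (\<Sum>j\<in>UNIV. (if i = j then x $ j else 0)
        - a $ i * ((if j = 0 then - b $ j else b $ j) * x $ j)
        - c $ i * ((if j = 0 then - d $ j else d $ j) * x $ j))"
      unfolding matrix_vector_mult_def rank2_update_def
      by (simp, rule sum.cong) (auto simp: algebra_simps)
    then show ?thesis
      by (simp only: sum_subtractf sum_distrib_left[symmetric] sum_mink_dual) simp
  qed
  then show ?thesis by (simp add: vec_eq_iff)
qed

text \<open>This maps n1 to n2 and n2 to -n1 and fixes the Minkowski orthogonal complement of both,
  so its square is the half-turn.\<close>

definition half_turn_root :: "vec5 \<Rightarrow> vec5 \<Rightarrow> mat5" where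
  "half_turn_root n1 n2 =
     rank2_update ((1 / mink n1 n1) *\<^sub>R (n1 - n2)) n1 ((1 / mink n2 n2) *\<^sub>R (n1 + n2)) n2"

lemma half_turn_root_square:
  assumes o: "mink n1 n2 = 0" and q1: "mink n1 n1 \<noteq> 0" and q2: "mink n2 n2 \<noteq> 0"
  shows "half_turn_root n1 n2 ** half_turn_root n1 n2 = refl_mat n1 ** refl_mat n2"
proof -
  have o': "mink n2 n1 = 0" using o by (simp add: mink_commute)
  have "half_turn_root n1 n2 *v (half_turn_root n1 n2 *v x) = (refl_mat n1 ** refl_mat n2) *v x"
    for x
  proof -
    let ?K = "half_turn_root n1 n2 *v x"
    have e1: "mink n1 ?K = - (mink n2 x * mink n1 n1 / mink n2 n2)"
      using o q1 q2 by (simp add: half_turn_root_def rank2_update_apply mink_bilinear field_simps)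
    have e2: "mink n2 ?K = mink n1 x * mink n2 n2 / mink n1 n1"
      using o' q1 q2 by (simp add: half_turn_root_def rank2_update_apply mink_bilinear field_simps)
    have "half_turn_root n1 n2 *v ?K = ?K - mink n1 ?K *\<^sub>R ((1 / mink n1 n1) *\<^sub>R (n1 - n2))
        - mink n2 ?K *\<^sub>R ((1 / mink n2 n2) *\<^sub>R (n1 + n2))"
      by (simp add: half_turn_root_def rank2_update_apply)
    also have "\<dots> = (refl_mat n1 ** refl_mat n2) *v x"
      unfolding e1 e2 half_turn_apply[OF o]
      using q1 q2 by (simp add: half_turn_root_def rank2_update_apply vec_eq_iff field_simps)
    finally show ?thesis .
  qed
  then show ?thesis by (simp add: matrix_eq matrix_vector_mul_assoc)
qed

lemma det_half_turn_pos:
  assumes o: "mink n1 n2 = 0" and q1: "mink n1 n1 \<noteq> 0" and q2: "mink n2 n2 \<noteq> 0"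
  shows "det (refl_mat n1 ** refl_mat n2) > 0"
proof -
  have "det (refl_mat n) \<noteq> 0" if "mink n n \<noteq> 0" for n
    using refl_mat_involutive[OF that] det_mul[of "refl_mat n" "refl_mat n"] by auto
  then have "det (refl_mat n1 ** refl_mat n2) \<noteq> 0"
    using q1 q2 by (simp add: det_mul)
  moreover have "det (refl_mat n1 ** refl_mat n2) = (det (half_turn_root n1 n2))^2"
    using half_turn_root_square[OF o q1 q2] by (metis det_mul power2_eq_square)
  ultimately show ?thesis by simp
qed

lemma orient_isometry_mult:
  assumes "orient_isometry M" "orient_isometry N"
  shows "orient_isometry (M ** N)"
  using assms unfolding orient_isometry_def
  by (auto simp: matrix_vector_mul_assoc[symmetric] det_mul image_subset_iff)

lemma orient_isometry_half_turn:
  assumes "is_half_turn P H"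
  shows "orient_isometry H"
proof -
  obtain n1 n2 where n: "mink n1 n1 > 0" "mink n2 n2 > 0" "mink n1 n2 = 0"
    and H: "H = refl_mat n1 ** refl_mat n2"
    using assms unfolding is_half_turn_def by blast
  have "(\<lambda>x. H *v x) ` hyp \<subseteq> hyp"
    using n by (auto simp: H matrix_vector_mul_assoc[symmetric] refl_mat_hyp)
  moreover have "det H > 0"
    using n by (simp add: H det_half_turn_pos)
  ultimately show ?thesis
    using n by (simp add: orient_isometry_def H matrix_vector_mul_assoc[symmetric] refl_mat_mink)
qed

text \<open>The linear hull is the Euclidean orthogonal complement of the two dual normals, which are
  independent because n1, n2 are Minkowski orthogonal and spacelike.\<close>

lemma is_plane_hyperplane_inter:
  assumes q1: "mink n1 n1 > 0" and q2: "mink n2 n2 > 0" and o: "mink n1 n2 = 0"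
    and p: "p \<in> hyperplane_of n1 \<inter> hyperplane_of n2"
  shows "is_plane (hyperplane_of n1 \<inter> hyperplane_of n2)"
proof -
  define V where "V = {x. mink x n1 = 0 \<and> mink x n2 = 0}"
  let ?a = "mink_dual n1" and ?b = "mink_dual n2"
  have "subspace V"
    unfolding subspace_def V_def
    by (simp add: mink_commute[of _ n1] mink_commute[of _ n2] mink_bilinear) (simp add: mink_expand)
  have a: "?a \<noteq> 0" using q1 inner_mink_dual[of n1 n1] by auto
  have "?b \<notin> span {?a}"
  proof
    assume "?b \<in> span {?a}"
    then obtain c where "?b = c *\<^sub>R ?a" by (auto simp: span_singleton)
    then have "inner ?b n2 = c * inner ?a n2" by simp
    then have "inner ?b n2 = 0" using o by (simp add: inner_mink_dual)
    with q2 show False by (simp add: inner_mink_dual)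
  qed
  then have "independent {?b, ?a}" and "?b \<noteq> ?a"
    using a by (auto simp: independent_insert span_base)
  then have dim_ab: "dim (span {?b, ?a}) = 2"
    using dim_span_eq_card_independent by fastforce
  have "V = {y \<in> UNIV. \<forall>x \<in> span {?b, ?a}. orthogonal x y}"
  proof -
    have "y \<in> V \<longleftrightarrow> orthogonal ?a y \<and> orthogonal ?b y" for y
      by (auto simp: V_def orthogonal_def inner_mink_dual mink_commute[of _ n1] mink_commute[of _ n2])
    moreover have "(\<forall>x \<in> span {?b, ?a}. orthogonal x y) \<longleftrightarrow> orthogonal ?a y \<and> orthogonal ?b y"
      for y
      using orthogonal_to_span[of _ "{?b, ?a}" y]
      by (auto simp: orthogonal_commute[of _ y] intro: span_base)
    ultimately show ?thesis by blast
  qed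
  then have "dim V + 2 = 5"
    using dim_subspace_orthogonal_to_vectors[of "span {?b, ?a}" UNIV] dim_ab by simp
  moreover have "hyperplane_of n1 \<inter> hyperplane_of n2 = V \<inter> hyp"
    by (auto simp: hyperplane_of_def V_def)
  ultimately show ?thesis
    unfolding is_plane_def geod_subspace_def using \<open>subspace V\<close> p by (intro exI[of _ V]) auto
qed

lemma is_half_turn_refl_product:
  assumes "mink n1 n1 > 0" "mink n2 n2 > 0" "mink n1 n2 = 0"
    and "p \<in> hyperplane_of n1 \<inter> hyperplane_of n2"
  shows "is_half_turn (hyperplane_of n1 \<inter> hyperplane_of n2) (refl_mat n1 ** refl_mat n2)"
  using assms is_plane_hyperplane_inter unfolding is_half_turn_def by blast

subsection \<open>The example\<close>

definition v5 :: "real \<Rightarrow> real \<Rightarrow> real \<Rightarrow> real \<Rightarrow> real \<Rightarrow> vec5" where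
  "v5 a b c d e = (\<chi> i. if i = 0 then a else if i = 1 then b else if i = 2 then c
       else if i = 3 then d else e)"

lemma v5_nth [simp]:
  "v5 a b c d e $ 0 = a" "v5 a b c d e $ 1 = b" "v5 a b c d e $ 2 = c"
  "v5 a b c d e $ 3 = d" "v5 a b c d e $ 4 = e"
  by (simp_all add: v5_def)

definition "n_alpha1 = v5 0 0 0 1 0"
definition "n_alpha2 = v5 0 0 0 0 1"
definition "n_beta1 = v5 0 (-1) (-1) 1 1"
definition "n_beta2 = v5 0 1 (-1) (-1) 1"
definition "n_delta1 = v5 (-1) 0 (-1) 1 0"
definition "n_delta2 = v5 0 1 0 0 (-1)"

lemmas normal_defs = n_alpha1_def n_alpha2_def n_beta1_def n_beta2_def n_delta1_def n_delta2_def

definition "H_alpha = refl_mat n_alpha1 ** refl_mat n_alpha2"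
definition "H_beta = refl_mat n_beta1 ** refl_mat n_beta2"
definition "H_delta = refl_mat n_delta1 ** refl_mat n_delta2"
definition "A_ex = H_alpha ** H_beta"
definition "B_ex = H_beta ** H_delta"

lemma mink_normals:
  "mink n_alpha1 n_alpha1 = 1" "mink n_alpha2 n_alpha2 = 1" "mink n_alpha1 n_alpha2 = 0"
  "mink n_beta1 n_beta1 = 4" "mink n_beta2 n_beta2 = 4" "mink n_beta1 n_beta2 = 0"
  "mink n_delta1 n_delta1 = 1" "mink n_delta2 n_delta2 = 2" "mink n_delta1 n_delta2 = 0"
  by (simp_all add: normal_defs mink_expand)

lemma H_alpha_apply: "H_alpha *v x = v5 (x$0) (x$1) (x$2) (- x$3) (- x$4)"
  unfolding H_alpha_def
  by (subst half_turn_apply) (simp_all add: normal_defs mink_expand vec_eq_iff forall_5)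

lemma H_beta_apply: "H_beta *v x = v5 (x$0) (x$3) (x$4) (x$1) (x$2)"
  unfolding H_beta_def
  by (subst half_turn_apply) (simp_all add: normal_defs mink_expand vec_eq_iff forall_5 field_simps)

lemma H_delta_apply:
  "H_delta *v x = v5 (3*x$0 - 2*x$2 + 2*x$3) (x$4) (2*x$0 - x$2 + 2*x$3) (-2*x$0 + 2*x$2 - x$3) (x$1)"
  unfolding H_delta_def
  by (subst half_turn_apply) (simp_all add: normal_defs mink_expand vec_eq_iff forall_5 field_simps)

lemma A_ex_apply: "A_ex *v x = v5 (x$0) (x$3) (x$4) (- x$1) (- x$2)"
  by (simp add: A_ex_def matrix_vector_mul_assoc[symmetric] H_alpha_apply H_beta_apply)

lemma B_ex_apply:
  "B_ex *v x = v5 (3*x$0 - 2*x$2 + 2*x$3) (-2*x$0 + 2*x$2 - x$3) (x$1) (x$4) (2*x$0 - x$2 + 2*x$3)"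
  by (simp add: B_ex_def matrix_vector_mul_assoc[symmetric] H_beta_apply H_delta_apply)

lemma linked_by_half_turns_A_B: "linked_by_half_turns A_ex B_ex"
proof -
  have "is_half_turn (hyperplane_of n_alpha1 \<inter> hyperplane_of n_alpha2) H_alpha"
    unfolding H_alpha_def
    by (rule is_half_turn_refl_product[where p = "v5 1 0 0 0 0"])
      (simp_all add: mink_normals normal_defs hyperplane_of_def hyp_def mink_expand)
  moreover have "is_half_turn (hyperplane_of n_beta1 \<inter> hyperplane_of n_beta2) H_beta"
    unfolding H_beta_def
    by (rule is_half_turn_refl_product[where p = "v5 3 2 0 2 0"])
      (simp_all add: mink_normals normal_defs hyperplane_of_def hyp_def mink_expand)
  moreover have "is_half_turn (hyperplane_of n_delta1 \<inter> hyperplane_of n_delta2) H_delta"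
    unfolding H_delta_def
    by (rule is_half_turn_refl_product[where p = "v5 (3/2) 0 1 (-1/2) 0"])
      (simp_all add: mink_normals normal_defs hyperplane_of_def hyp_def mink_expand)
  ultimately show ?thesis
    unfolding linked_by_half_turns_def A_ex_def B_ex_def by blast
qed

lemma A_ex_invariant_contains_e0:
  assumes "subspace V" "p \<in> V \<inter> hyp" "\<And>x. x \<in> V \<inter> hyp \<Longrightarrow> A_ex *v x \<in> V \<inter> hyp"
  shows "v5 1 0 0 0 0 \<in> V \<inter> hyp"
proof -
  have "p + A_ex *v (A_ex *v p) \<in> V"
    using assms by (simp add: subspace_add)
  moreover have "p + A_ex *v (A_ex *v p) = (2 * p$0) *\<^sub>R v5 1 0 0 0 0"
    by (simp add: A_ex_apply vec_eq_iff forall_5)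
  moreover have "p$0 > 0" using assms(2) by (simp add: hyp_def)
  ultimately have "v5 1 0 0 0 0 \<in> V"
    using \<open>subspace V\<close> subspace_scale[of V _ "1 / (2 * p$0)"] by fastforce
  then show ?thesis by (simp add: hyp_def mink_expand)
qed

lemma subspace_eq_UNIV_from_orbit:
  assumes "subspace V"
    and "v5 1 0 0 0 0 \<in> V" "v5 3 (-2) 0 0 2 \<in> V" "v5 3 0 2 2 0 \<in> V"
        "v5 9 (-6) (-2) 2 6 \<in> V" "v5 9 (-4) 0 0 8 \<in> V"
  shows "V = UNIV"
proof -
  have "x \<in> V" for x
  proof -
    have "x = (x$0 - 3 * (x$4 - x$1) / 4 - 3 * (x$2 + x$3) / 4) *\<^sub>R v5 1 0 0 0 0
       + ((x$4 - x$1) / 4 - 3 * (x$3 - x$2) / 4 - 3 * (x$1 + x$4) / 4) *\<^sub>R v5 3 (-2) 0 0 2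
       + ((x$2 + x$3) / 4) *\<^sub>R v5 3 0 2 2 0
       + ((x$3 - x$2) / 4) *\<^sub>R v5 9 (-6) (-2) 2 6
       + ((x$1 + x$4) / 4) *\<^sub>R v5 9 (-4) 0 0 8"
      by (simp add: vec_eq_iff forall_5 field_simps)
    also have "\<dots> \<in> V"
      using assms by (intro subspace_add subspace_scale) auto
    finally show ?thesis .
  qed
  then show ?thesis by auto
qed

lemma no_common_invariant_geod_subspace:
  assumes "k \<le> 3" "geod_subspace k S" "invariant A_ex S" "invariant B_ex S"
  shows False
proof -
  obtain V where V: "subspace V" "dim V = k + 1" "V \<inter> hyp \<noteq> {}" and S: "S = V \<inter> hyp"
    using assms(2) unfolding geod_subspace_def by blast
  have A: "A_ex *v x \<in> S" and B: "B_ex *v x \<in> S" if "x \<in> S" for x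
    using assms(3,4) that unfolding invariant_def by blast+
  then have e0: "v5 1 0 0 0 0 \<in> S"
    using A_ex_invariant_contains_e0[OF V(1)] V(3) S by blast
  have w1: "v5 3 (-2) 0 0 2 \<in> S" using B[OF e0] by (simp add: B_ex_apply)
  have w2: "v5 3 0 2 2 0 \<in> S" using A[OF w1] by (simp add: A_ex_apply)
  have w3: "v5 9 (-6) (-2) 2 6 \<in> S" using B[OF w1] by (simp add: B_ex_apply)
  have w4: "v5 9 (-4) 0 0 8 \<in> S" using B[OF w2] by (simp add: B_ex_apply)
  have "V = UNIV"
    using e0 w1 w2 w3 w4 by (intro subspace_eq_UNIV_from_orbit[OF V(1)]) (auto simp: S)
  then show False using V(2) assms(1) by simp
qed

theorem theorem8p1:
  shows "\<exists>A B. orient_isometry A \<and> orient_isometry B \<and> linked_by_half_turns A B \<and>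
     \<not> (\<exists>k S. k \<le> 3 \<and> geod_subspace k S \<and> invariant A S \<and> invariant B S)"
proof -
  obtain H\<alpha> H\<beta> H\<delta> \<alpha> \<beta> \<delta> where "is_half_turn \<alpha> H\<alpha>" "is_half_turn \<beta> H\<beta>" "is_half_turn \<delta> H\<delta>"
    and "A_ex = H\<alpha> ** H\<beta>" "B_ex = H\<beta> ** H\<delta>"
    using linked_by_half_turns_A_B unfolding linked_by_half_turns_def by blast
  then have "orient_isometry A_ex" "orient_isometry B_ex"
    by (metis orient_isometry_mult orient_isometry_half_turn)+
  then show ?thesis
    using linked_by_half_turns_A_B no_common_invariant_geod_subspace by blast
qed

end
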